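(* Let $\lambda,t_0,t_1\in\mathbb{R}$, let $T:\mathbb{Z}\to\mathbb{R}$ be the $2$-periodic sequence with $T(2j)=t_0$, $T(2j+1)=t_1$, and let $\omega\in\mathbb{R}$ with $\omega/2\pi$ irrational. If $t_0=0$, then the Lyapunov exponent of the periodic coupling AMO model satisfies $L(0)=0$, regardless of the value of $t_1$.
   Context: The periodic coupling AMO model is the family of operators on $\ell^2(\mathbb{Z})$, $(H_\theta u)(n)=u(n+1)+u(n-1)+\lambda T(n)\cos(\theta+n\omega)u(n)$, $\theta\in S^1=\mathbb{R}/2\pi\mathbb{Z}$. For $E\in\mathbb{R}$ and $h\in\{0,1\}$ let $A_E(\theta,h)=\begin{pmatrix}E-\lambda T(h)\cos\theta&-1\\1&0\end{pmatrix}$, and let $B_E(\theta)=A_E(\theta+\omega,1)A_E(\theta,0)$, viewed as a cocycle over the rotation $\theta\mapsto\theta+2\omega$ on $S^1$, with $B_E^m(\theta)=B_E(\theta+2(m-1)\omega)\cdots B_E(\theta+2\omega)B_E(\theta)$. The Lyapunov exponent is $L(E)=\lim_{m\to\infty}\frac{1}{2m}\int_{S^1}\log\|B_E^m(\theta)\|\frac{d\theta}{2\pi}$ (equivalently, the Lyapunov exponent of the one-step cocycle over $S^1\times\mathbb{Z}_2$ with respect to the uniform product measure); in particular $L(E)=0$ iff the exponent of the cocycle $(2\omega,B_E)$ is zero. *)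

theory Defs
  imports "HOL-Analysis.Analysis"
begin

definition Tper :: "real \<Rightarrow> real \<Rightarrow> int \<Rightarrow> real" where
  "Tper t0 t1 n = (if even n then t0 else t1)"

definition Amat :: "real \<Rightarrow> (int \<Rightarrow> real) \<Rightarrow> real \<Rightarrow> real \<Rightarrow> int \<Rightarrow> real^2^2" where
  "Amat lam T E \<theta> h =
     vector [vector [E - lam * T h * cos \<theta>, -1], vector [1, 0]]"

definition Bmat :: "real \<Rightarrow> (int \<Rightarrow> real) \<Rightarrow> real \<Rightarrow> real \<Rightarrow> real \<Rightarrow> real^2^2" where
  "Bmat lam T \<omega> E \<theta> = Amat lam T E (\<theta> + \<omega>) 1 ** Amat lam T E \<theta> 0"

fun Biter :: "real \<Rightarrow> (int \<Rightarrow> real) \<Rightarrow> real \<Rightarrow> real \<Rightarrow> nat \<Rightarrow> real \<Rightarrow> real^2^2" where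
  "Biter lam T \<omega> E 0 \<theta> = mat 1"
| "Biter lam T \<omega> E (Suc m) \<theta> =
     Bmat lam T \<omega> E (\<theta> + 2 * real m * \<omega>) ** Biter lam T \<omega> E m \<theta>"

definition opnorm :: "real^2^2 \<Rightarrow> real" where
  "opnorm M = onorm (\<lambda>x. M *v x)"

text \<open>The m-th term of the sequence whose limit is the Lyapunov exponent:
  1/(2m) * \<integral>_{S^1} log ||B_E^m(theta)|| dtheta/(2 pi).\<close>
definition lyap_term :: "real \<Rightarrow> (int \<Rightarrow> real) \<Rightarrow> real \<Rightarrow> real \<Rightarrow> nat \<Rightarrow> real" where
  "lyap_term lam T \<omega> E m =
     1 / (2 * real m) *
       (integral {0..2*pi} (\<lambda>\<theta>. ln (opnorm (Biter lam T \<omega> E m \<theta>))) / (2 * pi))"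

end

theory Submission
  imports Defs "HOL-Real_Asymp.Real_Asymp"
begin

text \<open>At energy 0 with \<open>t0 = 0\<close> the even-site transfer matrix is the rotation by \<open>\<pi>/2\<close>,
  and the two-step cocycle \<open>B\<close> becomes minus a unipotent shear. Shears form a one-parameter
  group, so \<open>B\<^sup>m\<close> is \<open>\<plusminus>\<close> a shear whose parameter is a sum of \<open>m\<close> bounded cosine terms.
  Hence \<open>1 \<le> \<parallel>B\<^sup>m\<parallel> \<le> 1 + C m\<close>, and the averaged logarithm divided by \<open>2m\<close> tends to 0.
  No arithmetic condition on \<open>\<omega>\<close> is needed.\<close>

definition shear :: "real \<Rightarrow> real^2^2" where
  "shear a = vector [vector [1, a], vector [0, 1]]"

lemma shear_zero: "shear 0 = mat 1"
  unfolding shear_def by (simp add: vec_eq_iff forall_2 mat_def vector_2)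

lemma shear_mult: "shear a ** shear b = shear (a + b)"
  unfolding shear_def
  by (simp add: vec_eq_iff forall_2 matrix_matrix_mult_def sum_2 vector_2)

lemma shear_mult_vector: "shear a *v x = x + (a * x$2) *\<^sub>R axis 1 1"
  unfolding shear_def
  by (simp add: vec_eq_iff forall_2 matrix_vector_mult_def sum_2 vector_2 axis_def)

lemma opnorm_scaleR: "opnorm (c *\<^sub>R M) = \<bar>c\<bar> * opnorm M"
  unfolding opnorm_def scaleR_matrix_vector_assoc[symmetric]
  by (simp add: onorm_scaleR)

lemma one_le_opnorm_shear: "1 \<le> opnorm (shear a)"
proof -
  have "norm (shear a *v axis 1 1) \<le> opnorm (shear a) * norm (axis 1 (1::real) :: real^2)"
    unfolding opnorm_def by (rule onorm) simp
  moreover have "shear a *v axis 1 1 = axis 1 1"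
    by (simp add: shear_mult_vector axis_def)
  ultimately show ?thesis by (simp add: norm_axis_1)
qed

lemma opnorm_shear_le: "opnorm (shear a) \<le> 1 + \<bar>a\<bar>"
  unfolding opnorm_def
proof (rule onorm_le)
  fix x :: "real^2"
  have "norm (shear a *v x) \<le> norm x + \<bar>a\<bar> * \<bar>x$2\<bar>"
    unfolding shear_mult_vector
    by (rule order_trans[OF norm_triangle_ineq]) (simp add: norm_axis_1 abs_mult)
  also have "\<dots> \<le> (1 + \<bar>a\<bar>) * norm x"
    by (simp add: algebra_simps mult_left_mono component_le_norm_cart)
  finally show "norm (shear a *v x) \<le> (1 + \<bar>a\<bar>) * norm x" .
qed

lemma Bmat_Tper_zero:
  "Bmat lam (Tper 0 t1) \<omega> 0 \<theta> = - shear (- lam * t1 * cos (\<theta> + \<omega>))"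
  unfolding Bmat_def Amat_def shear_def Tper_def
  by (simp add: vec_eq_iff forall_2 matrix_matrix_mult_def sum_2 vector_2)

lemma Biter_Tper_zero:
  "Biter lam (Tper 0 t1) \<omega> 0 m \<theta> =
     (-1) ^ m *\<^sub>R shear (\<Sum>k<m. - lam * t1 * cos (\<theta> + 2 * real k * \<omega> + \<omega>))"
proof (induction m)
  case 0
  then show ?case by (simp add: shear_zero)
next
  case (Suc m)
  have "- shear b ** (c *\<^sub>R shear a) = (- c) *\<^sub>R (shear b ** shear a)" for a b c
    by (simp add: vec_eq_iff matrix_matrix_mult_def sum_distrib_left sum_negf algebra_simps)
  then show ?case
    by (simp add: Suc Bmat_Tper_zero shear_mult add.commute)
qed

lemma ln_opnorm_Biter_Tper_zero_bounds:
  fixes lam t1 \<omega> \<theta> :: real and m :: nat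
  defines "f \<equiv> ln (opnorm (Biter lam (Tper 0 t1) \<omega> 0 m \<theta>))"
  shows "0 \<le> f \<and> f \<le> ln (1 + real m * \<bar>lam * t1\<bar>)"
proof -
  define a where "a = (\<Sum>k<m. - lam * t1 * cos (\<theta> + 2 * real k * \<omega> + \<omega>))"
  have f_eq: "f = ln (opnorm (shear a))"
    unfolding f_def a_def Biter_Tper_zero opnorm_scaleR by (simp add: power_abs)
  have "\<bar>a\<bar> \<le> (\<Sum>k<m. \<bar>lam * t1\<bar> * \<bar>cos (\<theta> + 2 * real k * \<omega> + \<omega>)\<bar>)"
    unfolding a_def by (rule order_trans[OF sum_abs]) (simp add: abs_mult)
  also have "\<dots> \<le> real m * \<bar>lam * t1\<bar>"
    using sum_mono[of "{..<m}" _ "\<lambda>_. \<bar>lam * t1\<bar>"] by (simp add: mult_left_le)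
  finally have "opnorm (shear a) \<le> 1 + real m * \<bar>lam * t1\<bar>"
    using opnorm_shear_le[of a] by linarith
  then show ?thesis
    using one_le_opnorm_shear[of a] unfolding f_eq by auto
qed

lemma integral_between_zero_and_const:
  fixes f :: "real \<Rightarrow> real"
  assumes "a \<le> b" and "\<And>x. x \<in> {a..b} \<Longrightarrow> 0 \<le> f x \<and> f x \<le> C"
  shows "0 \<le> integral {a..b} f \<and> integral {a..b} f \<le> C * (b - a)"
proof (cases "f integrable_on {a..b}")
  case True
  have "integral {a..b} f \<le> integral {a..b} (\<lambda>_. C)"
    using True assms(2) by (intro integral_le) auto
  with True assms show ?thesis
    by (auto intro: integral_nonneg simp: mult.commute)
next
  case False
  have "0 \<le> C" using assms by fastforce
  with False assms(1) show ?thesis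
    by (simp add: not_integrable_integral)
qed

lemma lyap_term_Tper_zero_bounds:
  "0 \<le> lyap_term lam (Tper 0 t1) \<omega> 0 m \<and>
   lyap_term lam (Tper 0 t1) \<omega> 0 m \<le> ln (1 + real m * \<bar>lam * t1\<bar>) / (2 * real m)"
proof -
  define C where "C = ln (1 + real m * \<bar>lam * t1\<bar>)"
  define I where "I = integral {0..2 * pi} (\<lambda>\<theta>. ln (opnorm (Biter lam (Tper 0 t1) \<omega> 0 m \<theta>)))"
  have "0 \<le> I \<and> I \<le> C * (2 * pi)"
    unfolding I_def C_def
    using integral_between_zero_and_const[of 0 "2 * pi"] ln_opnorm_Biter_Tper_zero_bounds
    by (metis (no_types, lifting) diff_zero pi_ge_zero zero_le_mult_iff zero_le_numeral)
  then have "0 \<le> I / (2 * pi)" and "I / (2 * pi) \<le> C"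
    by (simp_all add: divide_le_eq)
  moreover have "0 \<le> 1 / (2 * real m)"
    by simp
  ultimately have "0 \<le> 1 / (2 * real m) * (I / (2 * pi))"
    and "1 / (2 * real m) * (I / (2 * pi)) \<le> 1 / (2 * real m) * C"
    by (metis mult_nonneg_nonneg, metis mult_left_mono)
  then show ?thesis
    unfolding lyap_term_def I_def[symmetric] C_def[symmetric] by simp
qed

lemma ln_linear_over_linear_tendsto_zero:
  assumes "0 \<le> K"
  shows "(\<lambda>m. ln (1 + real m * K) / (2 * real m)) \<longlonglongrightarrow> 0"
proof (cases "K = 0")
  case True
  then show ?thesis by simp
next
  case False
  with assms have "0 < K" by simp
  then show ?thesis by real_asymp
qed

theorem mainTheorem2:
  fixes lam t0 t1 \<omega> :: real
  assumes "\<omega> / (2 * pi) \<notin> \<rat>"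
    and "t0 = 0"
  shows "lyap_term lam (Tper t0 t1) \<omega> 0 \<longlonglongrightarrow> 0"
  using lyap_term_Tper_zero_bounds[of lam t1 \<omega>] unfolding \<open>t0 = 0\<close>
  by (intro tendsto_sandwich[OF _ _ tendsto_const ln_linear_over_linear_tendsto_zero[of "\<bar>lam * t1\<bar>"]])
    (simp_all add: always_eventually)

end
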